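(* Let $a,b,k\in\mathbb{N}$ with $k\le\min(a,b)$. Then $(\mathcal{A}_k([a]\times[b]),\le_k)\cong\mathcal{D}_k([a]\times[b])$ as posets.
   Context: $[n]=\{1,\dots,n\}$, and $[a]\times[b]$ and $\mathbb{Z}_+^2$ carry the product order. For a finite poset $P$, $\mathcal{A}_k(P)$ is the set of antichains of $P$ of size $k$; for $A,B\in\mathcal{A}_k(P)$, $A\prec_k B$ means $A\setminus B=\{a\}$, $B\setminus A=\{b\}$ are singletons with $a<_P b$, and $\le_k$ is the reflexive transitive closure of $\prec_k$. A Ferrers diagram is a finite order ideal of $\mathbb{Z}_+^2$; its Durfee length is the largest $k$ with $[k]\times[k]\subseteq D$. $\mathcal{D}_k([a]\times[b])$ is the set of Ferrers diagrams of Durfee length exactly $k$ contained in $[a]\times[b]$, ordered by inclusion. *)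

theory Defs
  imports Main
begin

definition antichains :: "'a set \<Rightarrow> ('a \<Rightarrow> 'a \<Rightarrow> bool) \<Rightarrow> nat \<Rightarrow> 'a set set" where
  "antichains P le k = {A. A \<subseteq> P \<and> card A = k \<and>
      (\<forall>x\<in>A. \<forall>y\<in>A. x \<noteq> y \<longrightarrow> \<not> le x y)}"

definition antichain_step :: "'a set \<Rightarrow> ('a \<Rightarrow> 'a \<Rightarrow> bool) \<Rightarrow> nat \<Rightarrow> 'a set \<Rightarrow> 'a set \<Rightarrow> bool" where
  "antichain_step P le k A B \<longleftrightarrow> A \<in> antichains P le k \<and> B \<in> antichains P le k \<and>
      (\<exists>x y. A - B = {x} \<and> B - A = {y} \<and> le x y \<and> x \<noteq> y)"

definition antichain_le :: "'a set \<Rightarrow> ('a \<Rightarrow> 'a \<Rightarrow> bool) \<Rightarrow> nat \<Rightarrow> 'a set \<Rightarrow> 'a set \<Rightarrow> bool" where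
  "antichain_le P le k = (antichain_step P le k)\<^sup>*\<^sup>*"

definition prod_le :: "nat \<times> nat \<Rightarrow> nat \<times> nat \<Rightarrow> bool" where
  "prod_le p q \<longleftrightarrow> fst p \<le> fst q \<and> snd p \<le> snd q"

definition grid :: "nat \<Rightarrow> nat \<Rightarrow> (nat \<times> nat) set" where
  "grid a b = {1..a} \<times> {1..b}"

text \<open>\<Z>_+^2 is modelled as pairs of positive naturals.\<close>
definition posquad :: "(nat \<times> nat) set" where
  "posquad = {p. fst p \<ge> 1 \<and> snd p \<ge> 1}"

definition ferrers :: "(nat \<times> nat) set \<Rightarrow> bool" where
  "ferrers D \<longleftrightarrow> finite D \<and> D \<subseteq> posquad \<and>
     (\<forall>x\<in>D. \<forall>y\<in>posquad. prod_le y x \<longrightarrow> y \<in> D)"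

definition durfee :: "(nat \<times> nat) set \<Rightarrow> nat" where
  "durfee D = (GREATEST k. {1..k} \<times> {1..k} \<subseteq> D)"

definition ferrers_durfee :: "nat \<Rightarrow> nat \<Rightarrow> nat \<Rightarrow> (nat \<times> nat) set set" where
  "ferrers_durfee k a b = {D. ferrers D \<and> durfee D = k \<and> D \<subseteq> grid a b}"

end

(* An antichain A of size k in [a] x [b] is strictly decreasing, so it is determined by the sets
   of first and of second coordinates it occupies, hence by the counting functions
   c1 t = #{z in A. t <= fst z} and c2 t = #{z in A. t <= snd z}.  Its diagram consists of the
   cells (t + q - 1, q), 1 <= q <= c1 t, of the diagonals t >= 1 in the first k rows, together
   with their mirror images taken with c2.  As c1 and c2 start at k and drop by at most one per
   step, this is a Ferrers diagram with Durfee square k x k, and the diagonal lengths recover c1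
   and c2, so the map is injective.  A covering step replaces an element by a larger one and can
   only increase c1 and c2, so the map is monotone.  Conversely, if the diagram of A lies strictly
   inside a Ferrers diagram D of Durfee length k, some diagonal of D is longer than that of A,
   and moving a suitable element of A one column to the right (or one row up) lengthens exactly
   this diagonal by one cell while staying inside D.  Climbing in this way from A reaches an
   antichain with diagram D: from the antidiagonal, whose diagram is the square, this gives
   surjectivity, and from A with D the diagram of B it gives A <=_k B. *)

theory Submission
  imports Defs
begin

section \<open>Counting functions\<close>

definition count_ge :: "('a \<Rightarrow> nat) \<Rightarrow> 'a set \<Rightarrow> nat \<Rightarrow> nat" where
  "count_ge f A t = card {z \<in> A. t \<le> f z}"

lemma count_ge_le_card: "finite A \<Longrightarrow> count_ge f A t \<le> card A"
  unfolding count_ge_def by (rule card_mono) auto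

lemma count_ge_eq_card: "(\<And>z. z \<in> A \<Longrightarrow> t \<le> f z) \<Longrightarrow> count_ge f A t = card A"
  unfolding count_ge_def by (rule arg_cong[where f = card]) auto

lemma count_ge_Suc:
  assumes "finite A"
  shows "count_ge f A t = count_ge f A (Suc t) + card {z \<in> A. f z = t}"
proof -
  have "{z \<in> A. t \<le> f z} = {z \<in> A. Suc t \<le> f z} \<union> {z \<in> A. f z = t}" by auto
  then show ?thesis
    unfolding count_ge_def using assms by (simp add: card_Un_disjoint disjoint_iff)
qed

lemma count_ge_upper_bound:
  assumes "inj_on f A" "\<And>z. z \<in> A \<Longrightarrow> f z \<le> m"
  shows "count_ge f A t \<le> m + 1 - t"
proof -
  have "count_ge f A t \<le> card {t..m}"
    unfolding count_ge_def
    by (rule card_inj_on_le[where f = f]) (use assms in \<open>auto intro: inj_on_subset\<close>)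
  then show ?thesis by simp
qed

lemma count_ge_lipschitz:
  assumes "finite A" "inj_on f A"
  shows "count_ge f A s \<le> count_ge f A s' + (s' - s)"
proof -
  have "{z \<in> A. s \<le> f z} \<subseteq> {z \<in> A. s' \<le> f z} \<union> {z \<in> A. f z \<in> {s..<s'}}" by auto
  then have "count_ge f A s \<le> card ({z \<in> A. s' \<le> f z} \<union> {z \<in> A. f z \<in> {s..<s'}})"
    unfolding count_ge_def using assms(1) by (intro card_mono) auto
  also have "\<dots> \<le> count_ge f A s' + card {z \<in> A. f z \<in> {s..<s'}}"
    unfolding count_ge_def by (rule card_Un_le)
  also have "card {z \<in> A. f z \<in> {s..<s'}} \<le> card {s..<s'}"
    by (rule card_inj_on_le[where f = f]) (use assms(2) in \<open>auto intro: inj_on_subset\<close>)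
  finally show ?thesis by simp
qed

lemma count_ge_lower_bound:
  assumes "finite A" "inj_on f A" "\<And>z. z \<in> A \<Longrightarrow> 1 \<le> f z" "1 \<le> t"
  shows "card A + 1 \<le> count_ge f A t + t"
  using count_ge_lipschitz[OF assms(1,2), of 1 t] count_ge_eq_card[of A 1 f] assms(3,4) by simp

lemma count_ge_image: "inj_on g A \<Longrightarrow> count_ge f (g ` A) t = count_ge (f \<circ> g) A t"
  unfolding count_ge_def
  by (subst card_image[symmetric]) (auto intro: inj_on_subset arg_cong[where f = card])

lemma count_ge_exchange:
  assumes "finite A" "x \<in> A" "y \<notin> A"
  shows "count_ge f (insert y (A - {x})) t + of_bool (t \<le> f x) = count_ge f A t + of_bool (t \<le> f y)"
proof -
  define S where "S = {z \<in> A - {x}. t \<le> f z}"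
  have "finite S" "x \<notin> S" "y \<notin> S" using assms by (auto simp: S_def)
  moreover have "{z \<in> A. t \<le> f z} = (if t \<le> f x then insert x S else S)"
    using assms(2) by (auto simp: S_def)
  moreover have "{z \<in> insert y (A - {x}). t \<le> f z} = (if t \<le> f y then insert y S else S)"
    by (auto simp: S_def)
  ultimately show ?thesis unfolding count_ge_def by simp
qed

lemma count_ge_eq_imp_image_eq:
  assumes "finite A" "finite B" "\<And>t. count_ge f A t = count_ge f B t"
  shows "f ` A = f ` B"
proof -
  have "card {z \<in> A. f z = t} = card {z \<in> B. f z = t}" for t
    using count_ge_Suc[OF assms(1), of f t] count_ge_Suc[OF assms(2), of f t] assms(3) by simp
  moreover have "u \<in> f ` C \<longleftrightarrow> 0 < card {z \<in> C. f z = u}" if "finite C" for C u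
    using that by (auto simp: card_gt_0_iff)
  ultimately show ?thesis
    using assms(1,2) by (simp add: set_eq_iff)
qed

lemma count_ge_free_successor_walk:
  assumes "finite A" and h_lip: "\<And>t. 1 \<le> t \<Longrightarrow> h t \<le> h (Suc t) + 1"
  shows "u \<in> f ` A \<Longrightarrow> count_ge f A (Suc u) < h (Suc u) \<Longrightarrow>
    \<exists>z\<in>A. Suc (f z) \<notin> f ` A \<and> count_ge f A (Suc (f z)) < h (Suc (f z))"
proof (induction "count_ge f A (Suc u)" arbitrary: u rule: less_induct)
  case less
  show ?case
  proof (cases "Suc u \<in> f ` A")
    case False
    with less.prems show ?thesis by force
  next
    case True
    then have "0 < card {z \<in> A. f z = Suc u}"
      using assms(1) by (auto simp: card_gt_0_iff)
    then have "count_ge f A (Suc (Suc u)) < count_ge f A (Suc u)"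
      using count_ge_Suc[OF assms(1), of f "Suc u"] by simp
    moreover from this have "count_ge f A (Suc (Suc u)) < h (Suc (Suc u))"
      using less.prems(2) h_lip[of "Suc u"] by linarith
    ultimately show ?thesis
      using less.hyps[of "Suc u"] True by blast
  qed
qed

text \<open>Moving z to the free value \<open>Suc (f z)\<close> raises \<open>count_ge f A\<close> only at \<open>Suc (f z)\<close>,
  where it is still below the bound h.\<close>

lemma count_ge_free_successor_exists:
  assumes "finite A"
    and h_lip: "\<And>t. 1 \<le> t \<Longrightarrow> h t \<le> h (Suc t) + 1"
    and h_antimono: "\<And>t. 1 \<le> t \<Longrightarrow> h (Suc t) \<le> h t"
    and "h 1 \<le> count_ge f A 1" "1 \<le> t0" "count_ge f A t0 < h t0"
  shows "\<exists>z\<in>A. Suc (f z) \<notin> f ` A \<and> count_ge f A (Suc (f z)) < h (Suc (f z))"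
proof -
  let ?P = "\<lambda>t. 1 \<le> t \<and> count_ge f A t < h t"
  define t where "t = (LEAST t. ?P t)"
  have t: "1 \<le> t" "count_ge f A t < h t"
    using LeastI[of ?P t0] assms(5,6) by (auto simp: t_def)
  with assms(4) obtain u where u: "t = Suc u" "1 \<le> u"
    by (cases t) (auto simp: le_Suc_eq)
  have "h u \<le> count_ge f A u"
    using not_less_Least[of u ?P] u by (auto simp: t_def)
  moreover have "h t \<le> h u" using h_antimono u by simp
  ultimately have "count_ge f A (Suc u) < count_ge f A u" using t u by simp
  then have "u \<in> f ` A"
    using count_ge_Suc[OF assms(1), of f u] by (auto simp: card_gt_0_iff)
  then show ?thesis
    using count_ge_free_successor_walk[of A h u f] assms(1) h_lip t u by blast
qed

section \<open>Antichains of the product order\<close>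

lemma antichain_prod_le_cases:
  assumes "A \<in> antichains P prod_le k" "z \<in> A" "w \<in> A" "z \<noteq> w"
  shows "fst z < fst w \<and> snd w < snd z \<or> fst w < fst z \<and> snd z < snd w"
proof -
  have "\<not> prod_le z w" "\<not> prod_le w z" using assms by (auto simp: antichains_def)
  then show ?thesis by (auto simp: prod_le_def)
qed

lemma antichain_inj_on_fst: "A \<in> antichains P prod_le k \<Longrightarrow> inj_on fst A"
  and antichain_inj_on_snd: "A \<in> antichains P prod_le k \<Longrightarrow> inj_on snd A"
  by (auto simp: inj_on_def dest: antichain_prod_le_cases)

lemma card_greater_eq_imp_eq:
  fixes y y' :: "'a :: linorder"
  assumes "finite Y" "y \<in> Y" "y' \<in> Y" "card {v \<in> Y. y < v} = card {v \<in> Y. y' < v}"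
  shows "y = y'"
proof (rule ccontr)
  have less: "card {v \<in> Y. y' < v} < card {v \<in> Y. y < v}"
    if "y \<in> Y" "y' \<in> Y" "y < y'" for y y'
    using that assms(1) by (intro psubset_card_mono) auto
  assume "y \<noteq> y'"
  then show False
    using less[of y y'] less[of y' y] assms(2-4) by (metis less_irrefl neqE)
qed

lemma antichain_rank:
  assumes A: "A \<in> antichains P prod_le k" and z: "z \<in> A"
  shows "card {u \<in> fst ` A. u < fst z} = card {v \<in> snd ` A. snd z < v}"
proof -
  have "{w \<in> A. fst w < fst z} = {w \<in> A. snd z < snd w}"
    using antichain_prod_le_cases[OF A _ z] by (metis less_asym less_irrefl)
  moreover have "{u \<in> fst ` A. u < fst z} = fst ` {w \<in> A. fst w < fst z}"
    and "{v \<in> snd ` A. snd z < v} = snd ` {w \<in> A. snd z < snd w}" by auto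
  ultimately show ?thesis
    using antichain_inj_on_fst[OF A] antichain_inj_on_snd[OF A]
    by (simp add: card_image inj_on_subset)
qed

lemma antichain_eqI:
  assumes "A \<in> antichains P prod_le k" "B \<in> antichains P prod_le k" "finite P"
    and "fst ` A = fst ` B" "snd ` A = snd ` B"
  shows "A = B"
proof -
  have "A \<subseteq> B"
    if A: "A \<in> antichains P prod_le k" and B: "B \<in> antichains P prod_le k"
      and fst_eq: "fst ` A = fst ` B" and snd_eq: "snd ` A = snd ` B" for A B
  proof
    fix z assume z: "z \<in> A"
    then obtain z' where z': "z' \<in> B" "fst z' = fst z"
      using fst_eq by (metis imageE imageI)
    have "finite A"
      using A \<open>finite P\<close> finite_subset by (auto simp: antichains_def)
    moreover have "card {v \<in> snd ` A. snd z < v} = card {v \<in> snd ` A. snd z' < v}"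
      using antichain_rank[OF A z] antichain_rank[OF B z'(1)] fst_eq snd_eq z'(2) by simp
    moreover have "snd z' \<in> snd ` A"
      unfolding snd_eq using z'(1) by simp
    ultimately have "snd z = snd z'"
      using card_greater_eq_imp_eq[of "snd ` A" "snd z" "snd z'"] z by simp
    with z' show "z \<in> B" by (metis prod.expand)
  qed
  from this[of A B] this[of B A] assms show ?thesis by (intro subset_antisym) simp_all
qed

lemma antichain_step_count_ge_mono:
  assumes "antichain_step P le k A B" "finite A" "\<And>x y. le x y \<Longrightarrow> f x \<le> f y"
  shows "count_ge f A t \<le> count_ge f B t"
proof -
  obtain x y where xy: "A - B = {x}" "B - A = {y}" "le x y"
    using assms(1) by (auto simp: antichain_step_def)
  then have "B = insert y (A - {x})" "x \<in> A" "y \<notin> A" by blast+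
  with count_ge_exchange[OF assms(2) \<open>x \<in> A\<close> \<open>y \<notin> A\<close>, of f t] assms(3)[OF xy(3)]
  show ?thesis by (cases "t \<le> f x"; cases "t \<le> f y") auto
qed

lemma antichain_le_count_ge_mono:
  assumes "antichain_le P le k A B" "finite P" "\<And>x y. le x y \<Longrightarrow> f x \<le> f y"
  shows "count_ge f A t \<le> count_ge f B t"
  using assms(1) unfolding antichain_le_def
proof (induction rule: rtranclp_induct)
  case (step B C)
  then have "finite B"
    using assms(2) finite_subset by (auto simp: antichain_step_def antichains_def)
  with step antichain_step_count_ge_mono[of P le k B C f t] assms(3) show ?case
    by (meson le_trans)
qed simp

abbreviation reflect :: "('a \<times> 'b) set \<Rightarrow> ('b \<times> 'a) set" where
  "reflect X \<equiv> prod.swap ` X"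

lemma reflect_reflect [simp]: "reflect (reflect X) = X"
  by (simp add: image_comp)

lemma prod_le_swap [simp]: "prod_le (prod.swap x) (prod.swap y) \<longleftrightarrow> prod_le x y"
  by (auto simp: prod_le_def)

lemma antichains_reflect:
  assumes "A \<in> antichains P prod_le k"
  shows "reflect A \<in> antichains (reflect P) prod_le k"
proof -
  have "\<not> prod_le (prod.swap x) (prod.swap y)" if "x \<in> A" "y \<in> A" "x \<noteq> y" for x y
    using assms that by (simp add: antichains_def)
  with assms show ?thesis
    unfolding antichains_def by (auto simp: card_image image_mono)
qed

lemma antichain_step_reflect:
  assumes "antichain_step P prod_le k A B"
  shows "antichain_step (reflect P) prod_le k (reflect A) (reflect B)"
proof -
  obtain x y where "A - B = {x}" "B - A = {y}" "prod_le x y" "x \<noteq> y"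
    using assms by (auto simp: antichain_step_def)
  then have "reflect A - reflect B = {prod.swap x}" "reflect B - reflect A = {prod.swap y}"
    "prod_le (prod.swap x) (prod.swap y)" "prod.swap x \<noteq> prod.swap y"
    by (simp_all add: image_set_diff[symmetric] inj_eq)
  with assms show ?thesis
    unfolding antichain_step_def by (blast intro: antichains_reflect)
qed

lemma reflect_grid [simp]: "reflect (grid a b) = grid b a"
  by (auto simp: grid_def)

lemma finite_grid [simp]: "finite (grid a b)"
  by (simp add: grid_def)

lemma grid_antichain_finite: "A \<in> antichains (grid a b) prod_le k \<Longrightarrow> finite A"
  using finite_subset[of A "grid a b"] by (simp add: antichains_def)

lemma grid_antichain_bounds:
  assumes "A \<in> antichains (grid a b) prod_le k" "z \<in> A"
  shows "1 \<le> fst z" "fst z \<le> a" "1 \<le> snd z" "snd z \<le> b"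
  using assms by (auto simp: antichains_def grid_def)

lemma count_ge_shift_right:
  assumes "finite A" "z \<in> A" "Suc (fst z) \<notin> fst ` A"
  shows "count_ge fst (insert (Suc (fst z), snd z) (A - {z})) t =
      count_ge fst A t + of_bool (t = Suc (fst z))"
    and "count_ge snd (insert (Suc (fst z), snd z) (A - {z})) t = count_ge snd A t"
proof -
  have "(Suc (fst z), snd z) \<notin> A" using assms(3) by force
  note exchange = count_ge_exchange[OF assms(1,2) this]
  show "count_ge fst (insert (Suc (fst z), snd z) (A - {z})) t =
      count_ge fst A t + of_bool (t = Suc (fst z))"
    using exchange[of fst t] by (auto simp: le_Suc_eq)
  show "count_ge snd (insert (Suc (fst z), snd z) (A - {z})) t = count_ge snd A t"
    using exchange[of snd t] by simp
qed

lemma antichain_step_shift_right: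
  assumes A: "A \<in> antichains (grid a b) prod_le k" and z: "z \<in> A"
    and free: "Suc (fst z) \<notin> fst ` A" and "Suc (fst z) \<le> a"
  shows "antichain_step (grid a b) prod_le k A (insert (Suc (fst z), snd z) (A - {z}))"
proof -
  define n where "n = (Suc (fst z), snd z)"
  have "n \<notin> A" using free by (force simp: n_def)
  have "\<not> prod_le n w" "\<not> prod_le w n" if "w \<in> A" "w \<noteq> z" for w
    using antichain_prod_le_cases[OF A that(1) z that(2)] free that(1)
    by (auto simp: n_def prod_le_def image_iff)
  moreover have "n \<in> grid a b"
    using grid_antichain_bounds[OF A z] assms(4) by (simp add: n_def grid_def)
  moreover have "card (insert n (A - {z})) = k"
    using A z \<open>n \<notin> A\<close> grid_antichain_finite[OF A] card_Suc_Diff1[of A z]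
    by (simp add: antichains_def)
  ultimately have "insert n (A - {z}) \<in> antichains (grid a b) prod_le k"
    using A by (auto simp: antichains_def)
  moreover have "A - insert n (A - {z}) = {z}" "insert n (A - {z}) - A = {n}"
    using z \<open>n \<notin> A\<close> by auto
  ultimately show ?thesis
    using A by (auto simp: antichain_step_def n_def prod_le_def)
qed

definition antidiagonal :: "nat \<Rightarrow> (nat \<times> nat) set" where
  "antidiagonal k = (\<lambda>i. (i, k + 1 - i)) ` {1..k}"

lemma antidiagonal_in_antichains:
  assumes "k \<le> a" "k \<le> b"
  shows "antidiagonal k \<in> antichains (grid a b) prod_le k"
proof -
  have "inj_on (\<lambda>i. (i, k + 1 - i)) {1..k}" by (auto simp: inj_on_def)
  then show ?thesis
    using assms by (auto simp: antichains_def antidiagonal_def grid_def prod_le_def card_image)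
qed

section \<open>Down-closed sets and their diagonals\<close>

definition down_closed :: "(nat \<times> nat) set \<Rightarrow> bool" where
  "down_closed D \<longleftrightarrow> D \<subseteq> posquad \<and> (\<forall>x\<in>D. \<forall>y\<in>posquad. prod_le y x \<longrightarrow> y \<in> D)"

lemma ferrers_iff_down_closed: "ferrers D \<longleftrightarrow> finite D \<and> down_closed D"
  by (simp add: ferrers_def down_closed_def)

lemma down_closedD:
  "down_closed D \<Longrightarrow> (p, q) \<in> D \<Longrightarrow> 1 \<le> p' \<Longrightarrow> 1 \<le> q' \<Longrightarrow> p' \<le> p \<Longrightarrow> q' \<le> q \<Longrightarrow> (p', q') \<in> D"
  by (auto simp: down_closed_def posquad_def prod_le_def)

lemma down_closed_pos: "down_closed D \<Longrightarrow> (p, q) \<in> D \<Longrightarrow> 1 \<le> p \<and> 1 \<le> q"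
  by (auto simp: down_closed_def posquad_def)

lemma down_closed_reflect: "down_closed D \<Longrightarrow> down_closed (reflect D)"
  unfolding down_closed_def posquad_def prod_le_def by force

lemma square_subset_le_card:
  assumes "finite D" "{1..m} \<times> {1..m} \<subseteq> D"
  shows "m \<le> card D"
proof -
  have "m * m \<le> card D" using card_mono[OF assms] by simp
  then show ?thesis using le_square[of m] by linarith
qed

lemma square_subset_if_corner:
  assumes "down_closed D" "(m, m) \<in> D"
  shows "{1..m} \<times> {1..m} \<subseteq> D"
proof
  fix x assume "x \<in> {1..m} \<times> {1..m}"
  then show "x \<in> D"
    using down_closedD[OF assms, of "fst x" "snd x"] by (cases x) simp
qed

lemma durfee_eq_iff:
  assumes "ferrers D"
  shows "durfee D = k \<longleftrightarrow> {1..k} \<times> {1..k} \<subseteq> D \<and> (Suc k, Suc k) \<notin> D"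
proof -
  let ?P = "\<lambda>m. {1..m} \<times> {1..m} \<subseteq> D"
  have fin: "finite D" and down: "down_closed D"
    using assms by (simp_all add: ferrers_iff_down_closed)
  note bound = square_subset_le_card[OF fin]
  show ?thesis
  proof
    assume k: "durfee D = k"
    have "?P k"
      unfolding k[symmetric] durfee_def
      by (rule GreatestI_nat[where k = 0 and b = "card D"]) (simp_all add: bound)
    moreover have "(Suc k, Suc k) \<notin> D"
    proof
      assume "(Suc k, Suc k) \<in> D"
      then have "Suc k \<le> durfee D"
        unfolding durfee_def using square_subset_if_corner[OF down]
        by (intro Greatest_le_nat[where b = "card D"]) (simp_all add: bound)
      with k show False by simp
    qed
    ultimately show "?P k \<and> (Suc k, Suc k) \<notin> D" ..
  next
    assume k: "?P k \<and> (Suc k, Suc k) \<notin> D"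
    have "m \<le> k" if "?P m" for m
    proof (rule ccontr)
      assume "\<not> m \<le> k"
      then have "(Suc k, Suc k) \<in> {1..m} \<times> {1..m}" by simp
      with that k show False by blast
    qed
    with k show "durfee D = k"
      unfolding durfee_def by (intro Greatest_equality) simp_all
  qed
qed

lemma ferrers_durfee_reflect:
  assumes "D \<in> ferrers_durfee k a b"
  shows "reflect D \<in> ferrers_durfee k b a"
proof -
  have D: "finite D" "down_closed D" "D \<subseteq> grid a b" "durfee D = k"
    using assms by (simp_all add: ferrers_durfee_def ferrers_iff_down_closed)
  then have "ferrers (reflect D)"
    using down_closed_reflect by (simp add: ferrers_iff_down_closed)
  moreover have "reflect D \<subseteq> grid b a"
    using image_mono[OF D(3), of prod.swap] by simp
  moreover have "reflect ({1..k} \<times> {1..k}) = {1..k} \<times> {1..k}"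
    by force
  then have "{1..k} \<times> {1..k} \<subseteq> reflect D \<longleftrightarrow> {1..k} \<times> {1..k} \<subseteq> D"
    by (metis image_mono reflect_reflect)
  ultimately show ?thesis
    using D durfee_eq_iff[of D k] durfee_eq_iff[of "reflect D" k]
    by (simp add: ferrers_durfee_def ferrers_iff_down_closed)
qed

lemma ferrers_durfeeD:
  assumes "D \<in> ferrers_durfee k a b"
  shows "down_closed D" "D \<subseteq> grid a b" "{1..k} \<times> {1..k} \<subseteq> D" "(Suc k, Suc k) \<notin> D"
  using assms durfee_eq_iff[of D k] by (simp_all add: ferrers_durfee_def ferrers_iff_down_closed)

lemma eq_atLeastAtMost_card_if_down_closed:
  fixes S :: "nat set"
  assumes "finite S" "0 \<notin> S" and down: "\<And>q q'. q \<in> S \<Longrightarrow> 1 \<le> q' \<Longrightarrow> q' \<le> q \<Longrightarrow> q' \<in> S"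
  shows "S = {1..card S}"
proof (cases "S = {}")
  case False
  have "S = {1..Max S}"
  proof
    show "S \<subseteq> {1..Max S}"
      using assms(1,2) by (auto simp: Suc_le_eq intro: gr0I)
    show "{1..Max S} \<subseteq> S"
      using down[OF Max_in[OF assms(1) False]] by auto
  qed
  then show ?thesis by (metis card_atLeastAtMost diff_Suc_1)
qed simp

text \<open>The t-th diagonal, restricted to the first k rows, consists of the cells \<open>(t + q - 1, q)\<close>
  with \<open>1 \<le> q \<le> k\<close>; \<open>t = 1\<close> is the main diagonal.\<close>

definition diag_len :: "nat \<Rightarrow> (nat \<times> nat) set \<Rightarrow> nat \<Rightarrow> nat" where
  "diag_len k D t = card {q \<in> {1..k}. (t + q - 1, q) \<in> D}"

lemma diag_len_le: "diag_len k D t \<le> k"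
proof -
  have "diag_len k D t \<le> card {1..k}"
    unfolding diag_len_def by (rule card_mono) auto
  then show ?thesis by simp
qed

lemma diag_len_mono: "D \<subseteq> D' \<Longrightarrow> diag_len k D t \<le> diag_len k D' t"
  unfolding diag_len_def by (rule card_mono) auto

lemma diag_len_mem_iff:
  assumes "down_closed D" "1 \<le> t" "1 \<le> q" "q \<le> k"
  shows "(t + q - 1, q) \<in> D \<longleftrightarrow> q \<le> diag_len k D t"
proof -
  define S where "S = {q \<in> {1..k}. (t + q - 1, q) \<in> D}"
  define m where "m = card S"
  have "S = {1..m}"
    unfolding m_def
  proof (rule eq_atLeastAtMost_card_if_down_closed)
    fix q q' assume q: "q \<in> S" and q': "1 \<le> q'" "q' \<le> q"
    have "(t + q' - 1, q') \<in> D"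
      using down_closedD[OF assms(1), of "t + q - 1" q "t + q' - 1" q'] q q' assms(2)
      by (simp add: S_def)
    with q q' show "q' \<in> S" by (simp add: S_def)
  qed (simp_all add: S_def)
  moreover have "q \<in> S \<longleftrightarrow> (t + q - 1, q) \<in> D"
    using assms(3,4) by (simp add: S_def)
  moreover have "diag_len k D t = m"
    by (simp add: diag_len_def m_def S_def)
  ultimately show ?thesis
    using assms(3) by simp
qed

lemma diag_len_antimono:
  assumes "down_closed D" "1 \<le> s" "s \<le> t"
  shows "diag_len k D t \<le> diag_len k D s"
proof -
  define q where "q = diag_len k D t"
  show ?thesis
  proof (cases "q = 0")
    case False
    then have "(t + q - 1, q) \<in> D"
      using diag_len_mem_iff[OF assms(1), of t q k] diag_len_le[of k D t] assms by (simp add: q_def)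
    then have "(s + q - 1, q) \<in> D"
      using down_closedD[OF assms(1)] assms False by simp
    then show ?thesis
      using diag_len_mem_iff[OF assms(1), of s q k] diag_len_le[of k D t] assms False
      by (simp add: q_def)
  qed (simp add: q_def)
qed

lemma diag_len_lipschitz:
  assumes "down_closed D" "1 \<le> t"
  shows "diag_len k D t \<le> diag_len k D (Suc t) + 1"
proof -
  define q where "q = diag_len k D t"
  show ?thesis
  proof (cases "q \<le> 1")
    case False
    then have "(t + q - 1, q) \<in> D"
      using diag_len_mem_iff[OF assms(1,2), of q k] diag_len_le[of k D t] by (simp add: q_def)
    then have "(Suc t + (q - 1) - 1, q - 1) \<in> D"
      using down_closedD[OF assms(1)] assms False by simp
    then have "q - 1 \<le> diag_len k D (Suc t)"
      using diag_len_mem_iff[OF assms(1), of "Suc t" "q - 1" k] diag_len_le[of k D t] False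
      by (simp add: q_def)
    then show ?thesis by (simp add: q_def)
  qed (simp add: q_def)
qed

lemma diag_len_pos:
  assumes "down_closed D" "1 \<le> t" "0 < diag_len k D t"
  shows "(t, 1) \<in> D"
  using diag_len_mem_iff[OF assms(1,2), of 1 k] diag_len_le[of k D t] assms(3) by simp

lemma subset_if_diag_len_le:
  assumes D: "down_closed D" "(Suc k, Suc k) \<notin> D" and D': "down_closed D'"
    and le: "\<And>t. 1 \<le> t \<Longrightarrow> diag_len k D t \<le> diag_len k D' t"
    and le_reflect: "\<And>t. 1 \<le> t \<Longrightarrow> diag_len k (reflect D) t \<le> diag_len k (reflect D') t"
  shows "D \<subseteq> D'"
proof -
  have lower: "(p, q) \<in> E'"
    if E: "down_closed E" "down_closed E'" "\<And>t. 1 \<le> t \<Longrightarrow> diag_len k E t \<le> diag_len k E' t"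
      and pq: "(p, q) \<in> E" "q \<le> k" "q \<le> p" for E E' p q
  proof -
    define t where "t = p + 1 - q"
    have t: "1 \<le> t" "t + q - 1 = p" using pq by (auto simp: t_def)
    have "1 \<le> q" using down_closed_pos[OF E(1) pq(1)] by simp
    then have "q \<le> diag_len k E t"
      using diag_len_mem_iff[OF E(1) t(1) \<open>1 \<le> q\<close> pq(2)] pq(1) t(2) by simp
    also have "\<dots> \<le> diag_len k E' t" using E(3) t(1) .
    finally show ?thesis
      using diag_len_mem_iff[OF E(2) t(1) \<open>1 \<le> q\<close> pq(2)] t(2) by simp
  qed
  show ?thesis
  proof
    fix x assume x: "x \<in> D"
    obtain p q where pq: "x = (p, q)" by (cases x)
    have "q \<le> k \<or> p \<le> k"
      using x D(2) down_closedD[OF D(1), of p q "Suc k" "Suc k"] by (force simp: pq)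
    then consider "q \<le> k" "q \<le> p" | "p \<le> k" "p \<le> q" by linarith
    then show "x \<in> D'"
    proof cases
      case 1
      then show ?thesis using lower[OF D(1) D' le] x by (simp add: pq)
    next
      case 2
      then have "(q, p) \<in> reflect D'"
        using lower[OF down_closed_reflect[OF D(1)] down_closed_reflect[OF D'] le_reflect] x
        by (simp add: pq)
      then show ?thesis by (simp add: pq)
    qed
  qed
qed

section \<open>The diagram of an antichain\<close>

lemma diag_bound_downward:
  fixes c :: "nat \<Rightarrow> nat"
  assumes lip: "\<And>s s'. c s \<le> c s' + (s' - s)" and "k \<le> c 0"
    and "q \<le> k" "q \<le> c (p + 1 - q)" "p' \<le> p" "q' \<le> q"
  shows "q' \<le> c (p' + 1 - q')"
  using lip[of "p + 1 - q" "p' + 1 - q'"] lip[of 0 "p' + 1 - q'"] assms(2-6) by arith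

text \<open>For \<open>p < q\<close> the truncated index \<open>p + 1 - q\<close> is 0, where \<open>count_ge fst A 0 = card A = k\<close>,
  so every cell of the first k rows left of the main diagonal belongs to the diagram.\<close>

definition antichain_diagram :: "nat \<Rightarrow> (nat \<times> nat) set \<Rightarrow> (nat \<times> nat) set" where
  "antichain_diagram k A = {(p, q). 1 \<le> p \<and> 1 \<le> q \<and>
     (q \<le> k \<and> q \<le> count_ge fst A (p + 1 - q) \<or> p \<le> k \<and> p \<le> count_ge snd A (q + 1 - p))}"

lemma count_ge_reflect:
  "count_ge fst (reflect A) = count_ge snd A" "count_ge snd (reflect A) = count_ge fst A"
  by (simp_all add: fun_eq_iff count_ge_image comp_def)

lemma antichain_diagram_reflect: "antichain_diagram k (reflect A) = reflect (antichain_diagram k A)"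
  by (force simp: antichain_diagram_def count_ge_reflect)

lemma down_closed_antichain_diagram:
  assumes A: "A \<in> antichains (grid a b) prod_le k"
  shows "down_closed (antichain_diagram k A)"
proof -
  have fin: "finite A" and card: "card A = k"
    using grid_antichain_finite[OF A] A by (simp_all add: antichains_def)
  have fst_lip: "\<And>s s'. count_ge fst A s \<le> count_ge fst A s' + (s' - s)"
    and snd_lip: "\<And>s s'. count_ge snd A s \<le> count_ge snd A s' + (s' - s)"
    using count_ge_lipschitz[OF fin antichain_inj_on_fst[OF A]]
      count_ge_lipschitz[OF fin antichain_inj_on_snd[OF A]] by simp_all
  have "k \<le> count_ge fst A 0" "k \<le> count_ge snd A 0"
    using count_ge_eq_card[of A 0] card by simp_all
  note fst_down = diag_bound_downward[OF fst_lip this(1)]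
    and snd_down = diag_bound_downward[OF snd_lip this(2)]
  show ?thesis
    unfolding down_closed_def
  proof (intro conjI ballI impI)
    show "antichain_diagram k A \<subseteq> posquad"
      by (auto simp: antichain_diagram_def posquad_def)
  next
    fix x y assume x: "x \<in> antichain_diagram k A" and y: "y \<in> posquad" "prod_le y x"
    obtain p q p' q' where pq: "x = (p, q)" "y = (p', q')" by fastforce
    have le: "1 \<le> p'" "1 \<le> q'" "p' \<le> p" "q' \<le> q"
      using y by (simp_all add: pq posquad_def prod_le_def)
    have "q \<le> k \<and> q \<le> count_ge fst A (p + 1 - q) \<or> p \<le> k \<and> p \<le> count_ge snd A (q + 1 - p)"
      using x by (simp add: pq antichain_diagram_def)
    then have "q' \<le> k \<and> q' \<le> count_ge fst A (p' + 1 - q') \<or>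
        p' \<le> k \<and> p' \<le> count_ge snd A (q' + 1 - p')"
      using fst_down[of q p p' q'] snd_down[of p q q' p'] le by auto
    then show "y \<in> antichain_diagram k A"
      using le by (simp add: pq antichain_diagram_def)
  qed
qed

lemma antichain_diagram_subset_grid:
  assumes A: "A \<in> antichains (grid a b) prod_le k" and "k \<le> a" "k \<le> b"
  shows "antichain_diagram k A \<subseteq> grid a b"
proof
  fix x assume x: "x \<in> antichain_diagram k A"
  obtain p q where pq: "x = (p, q)" by fastforce
  have "count_ge fst A (p + 1 - q) \<le> a + 1 - (p + 1 - q)"
    using count_ge_upper_bound[OF antichain_inj_on_fst[OF A]] grid_antichain_bounds[OF A] by blast
  moreover have "count_ge snd A (q + 1 - p) \<le> b + 1 - (q + 1 - p)"
    using count_ge_upper_bound[OF antichain_inj_on_snd[OF A]] grid_antichain_bounds[OF A] by blast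
  moreover have "1 \<le> p" "1 \<le> q"
    "q \<le> k \<and> q \<le> count_ge fst A (p + 1 - q) \<or> p \<le> k \<and> p \<le> count_ge snd A (q + 1 - p)"
    using x by (simp_all add: pq antichain_diagram_def)
  ultimately have "p \<le> a" "q \<le> b"
    using assms(2,3) by arith+
  with \<open>1 \<le> p\<close> \<open>1 \<le> q\<close> show "x \<in> grid a b"
    by (simp add: pq grid_def)
qed

lemma square_subset_antichain_diagram:
  assumes A: "A \<in> antichains (grid a b) prod_le k"
  shows "{1..k} \<times> {1..k} \<subseteq> antichain_diagram k A"
proof
  fix x assume "x \<in> {1..k} \<times> {1..k}"
  then obtain p q where pq: "x = (p, q)" "1 \<le> p" "p \<le> k" "1 \<le> q" "q \<le> k" by auto
  have fin: "finite A" and card: "card A = k"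
    using grid_antichain_finite[OF A] A by (simp_all add: antichains_def)
  have "q \<le> count_ge fst A (p + 1 - q)"
  proof (cases "p + 1 \<le> q")
    case True
    then show ?thesis using count_ge_eq_card[of A 0 fst] card pq by simp
  next
    case False
    then show ?thesis
      using count_ge_lower_bound[OF fin antichain_inj_on_fst[OF A], of "p + 1 - q"]
        grid_antichain_bounds(1)[OF A] card pq by fastforce
  qed
  then show "x \<in> antichain_diagram k A"
    using pq by (simp add: antichain_diagram_def)
qed

lemma corner_notin_antichain_diagram: "(Suc k, Suc k) \<notin> antichain_diagram k A"
  by (simp add: antichain_diagram_def)

lemma antichain_diagram_in_ferrers_durfee:
  assumes A: "A \<in> antichains (grid a b) prod_le k" and "k \<le> a" "k \<le> b"
  shows "antichain_diagram k A \<in> ferrers_durfee k a b"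
proof -
  have "antichain_diagram k A \<subseteq> grid a b"
    using antichain_diagram_subset_grid[OF assms] .
  moreover from this have "ferrers (antichain_diagram k A)"
    using down_closed_antichain_diagram[OF A] finite_subset[OF _ finite_grid]
    by (simp add: ferrers_iff_down_closed)
  ultimately show ?thesis
    using durfee_eq_iff square_subset_antichain_diagram[OF A] corner_notin_antichain_diagram
    by (simp add: ferrers_durfee_def)
qed

lemma diag_len_antichain_diagram:
  assumes A: "A \<in> antichains (grid a b) prod_le k" and t: "1 \<le> t"
  shows "diag_len k (antichain_diagram k A) t = count_ge fst A t"
proof -
  have fin: "finite A" and card: "card A = k"
    using grid_antichain_finite[OF A] A by (simp_all add: antichains_def)
  have lower: "k + 1 \<le> count_ge fst A t + t"
    using count_ge_lower_bound[OF fin antichain_inj_on_fst[OF A] _ t]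
      grid_antichain_bounds(1)[OF A] card by simp
  have upper: "count_ge fst A t \<le> k"
    using count_ge_le_card[OF fin] card by metis
  have "{q \<in> {1..k}. (t + q - 1, q) \<in> antichain_diagram k A} = {1..count_ge fst A t}"
  proof (intro set_eqI iffI)
    fix q assume "q \<in> {q \<in> {1..k}. (t + q - 1, q) \<in> antichain_diagram k A}"
    then have "1 \<le> q" "q \<le> k" "q \<le> count_ge fst A t \<or> t + q - 1 \<le> k"
      using t by (auto simp: antichain_diagram_def)
    with lower show "q \<in> {1..count_ge fst A t}" by auto
  next
    fix q assume "q \<in> {1..count_ge fst A t}"
    with upper t show "q \<in> {q \<in> {1..k}. (t + q - 1, q) \<in> antichain_diagram k A}"
      by (auto simp: antichain_diagram_def)
  qed
  then show ?thesis by (simp add: diag_len_def)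
qed

lemma diag_len_reflect_antichain_diagram:
  assumes A: "A \<in> antichains (grid a b) prod_le k" and t: "1 \<le> t"
  shows "diag_len k (reflect (antichain_diagram k A)) t = count_ge snd A t"
  using diag_len_antichain_diagram[of "reflect A" b a k t] antichains_reflect[OF A] t
  by (simp add: antichain_diagram_reflect count_ge_reflect)

lemma antichain_diagram_subset_iff:
  assumes A: "A \<in> antichains (grid a b) prod_le k" and D: "down_closed D"
  shows "antichain_diagram k A \<subseteq> D \<longleftrightarrow>
    (\<forall>t\<ge>1. count_ge fst A t \<le> diag_len k D t \<and> count_ge snd A t \<le> diag_len k (reflect D) t)"
proof
  assume "antichain_diagram k A \<subseteq> D"
  then show "\<forall>t\<ge>1. count_ge fst A t \<le> diag_len k D t \<and> count_ge snd A t \<le> diag_len k (reflect D) t"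
    using diag_len_mono[of "antichain_diagram k A" D k]
      diag_len_mono[of "reflect (antichain_diagram k A)" "reflect D" k]
      diag_len_antichain_diagram[OF A] diag_len_reflect_antichain_diagram[OF A]
    by (metis image_mono)
next
  assume "\<forall>t\<ge>1. count_ge fst A t \<le> diag_len k D t \<and> count_ge snd A t \<le> diag_len k (reflect D) t"
  then show "antichain_diagram k A \<subseteq> D"
    using diag_len_antichain_diagram[OF A] diag_len_reflect_antichain_diagram[OF A]
    by (intro subset_if_diag_len_le[OF down_closed_antichain_diagram[OF A]
          corner_notin_antichain_diagram D])
      simp_all
qed

lemma antichain_diagram_inj:
  assumes A: "A \<in> antichains (grid a b) prod_le k" and B: "B \<in> antichains (grid a b) prod_le k"
    and eq: "antichain_diagram k A = antichain_diagram k B"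
  shows "A = B"
proof -
  have fin: "finite A" "finite B"
    using grid_antichain_finite A B by blast+
  have "count_ge f A 0 = count_ge f B 0" for f :: "nat \<times> nat \<Rightarrow> nat"
    using A B count_ge_eq_card[of A 0 f] count_ge_eq_card[of B 0 f] by (simp add: antichains_def)
  then have "count_ge fst A t = count_ge fst B t" "count_ge snd A t = count_ge snd B t" for t
    using diag_len_antichain_diagram[OF A, of t] diag_len_antichain_diagram[OF B, of t]
      diag_len_reflect_antichain_diagram[OF A, of t] diag_len_reflect_antichain_diagram[OF B, of t]
      eq
    by (cases "t = 0"; simp)+
  then have "fst ` A = fst ` B" "snd ` A = snd ` B"
    using count_ge_eq_imp_image_eq[OF fin] by blast+
  then show ?thesis
    using antichain_eqI[OF A B finite_grid] by blast
qed

lemma antichain_diagram_mono: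
  assumes "antichain_le (grid a b) prod_le k A B"
  shows "antichain_diagram k A \<subseteq> antichain_diagram k B"
proof -
  have "count_ge fst A t \<le> count_ge fst B t" "count_ge snd A t \<le> count_ge snd B t" for t
    using antichain_le_count_ge_mono[OF assms finite_grid] by (simp_all add: prod_le_def)
  then show ?thesis
    unfolding antichain_diagram_def by (blast intro: le_trans)
qed

lemma antichain_diagram_shiftable_element:
  assumes A: "A \<in> antichains (grid a b) prod_le k" and D: "D \<in> ferrers_durfee k a b"
    and t0: "1 \<le> t0" "count_ge fst A t0 < diag_len k D t0"
  obtains z where "z \<in> A" "Suc (fst z) \<notin> fst ` A" "Suc (fst z) \<le> a"
    "count_ge fst A (Suc (fst z)) < diag_len k D (Suc (fst z))"
proof -
  note D_props = ferrers_durfeeD[OF D]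
  have "count_ge fst A 1 = k"
    using count_ge_eq_card[of A 1 fst] grid_antichain_bounds(1)[OF A] A
    by (simp add: antichains_def)
  then have "diag_len k D 1 \<le> count_ge fst A 1"
    using diag_len_le by metis
  moreover have "diag_len k D (Suc t) \<le> diag_len k D t" if "1 \<le> t" for t
    using diag_len_antimono[OF D_props(1) that] by simp
  ultimately obtain z where z: "z \<in> A" "Suc (fst z) \<notin> fst ` A"
    and gap: "count_ge fst A (Suc (fst z)) < diag_len k D (Suc (fst z))"
    using count_ge_free_successor_exists[OF grid_antichain_finite[OF A]
        diag_len_lipschitz[OF D_props(1)] _ _ t0] by blast
  have "(Suc (fst z), 1) \<in> D"
    using diag_len_pos[OF D_props(1), of "Suc (fst z)" k] gap by simp
  then have "Suc (fst z) \<le> a"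
    using D_props(2) by (auto simp: grid_def)
  with z gap show ?thesis using that by blast
qed

lemma antichain_diagram_step_right:
  assumes A: "A \<in> antichains (grid a b) prod_le k" and D: "D \<in> ferrers_durfee k a b"
    and sub: "antichain_diagram k A \<subseteq> D"
    and t0: "1 \<le> t0" "count_ge fst A t0 < diag_len k D t0"
  shows "\<exists>A'. antichain_step (grid a b) prod_le k A A' \<and> antichain_diagram k A' \<subseteq> D"
proof -
  note D_props = ferrers_durfeeD[OF D]
  obtain z where z: "z \<in> A" "Suc (fst z) \<notin> fst ` A" "Suc (fst z) \<le> a"
    and gap: "count_ge fst A (Suc (fst z)) < diag_len k D (Suc (fst z))"
    using antichain_diagram_shiftable_element[OF A D t0] .
  define A' where "A' = insert (Suc (fst z), snd z) (A - {z})"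
  have step: "antichain_step (grid a b) prod_le k A A'"
    unfolding A'_def using antichain_step_shift_right[OF A z] .
  then have A': "A' \<in> antichains (grid a b) prod_le k"
    by (simp add: antichain_step_def)
  note counts = count_ge_shift_right[OF grid_antichain_finite[OF A] z(1,2), folded A'_def]
  have bounds: "count_ge fst A t \<le> diag_len k D t" "count_ge snd A t \<le> diag_len k (reflect D) t"
    if "1 \<le> t" for t
    using sub that antichain_diagram_subset_iff[OF A D_props(1)] by blast+
  have "\<forall>t\<ge>1. count_ge fst A' t \<le> diag_len k D t \<and> count_ge snd A' t \<le> diag_len k (reflect D) t"
  proof (intro allI impI conjI)
    fix t :: nat assume t: "1 \<le> t"
    show "count_ge fst A' t \<le> diag_len k D t"
      using counts(1)[of t] bounds(1)[OF t] gap by (cases "t = Suc (fst z)") auto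
    show "count_ge snd A' t \<le> diag_len k (reflect D) t"
      using counts(2)[of t] bounds(2)[OF t] by simp
  qed
  then have "antichain_diagram k A' \<subseteq> D"
    using antichain_diagram_subset_iff[OF A' D_props(1)] by blast
  with step show ?thesis by blast
qed

lemma antichain_diagram_step:
  assumes A: "A \<in> antichains (grid a b) prod_le k" and D: "D \<in> ferrers_durfee k a b"
    and psub: "antichain_diagram k A \<subset> D"
  shows "\<exists>A'. antichain_step (grid a b) prod_le k A A' \<and> antichain_diagram k A' \<subseteq> D"
proof -
  note D_props = ferrers_durfeeD[OF D]
  have "\<exists>t\<ge>1. count_ge fst A t < diag_len k D t \<or> count_ge snd A t < diag_len k (reflect D) t"
  proof (rule ccontr)
    assume "\<not> ?thesis"
    then have "D \<subseteq> antichain_diagram k A"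
      using diag_len_antichain_diagram[OF A] diag_len_reflect_antichain_diagram[OF A]
      by (intro subset_if_diag_len_le[OF D_props(1,4) down_closed_antichain_diagram[OF A]])
        (simp_all add: not_less)
    with psub show False by blast
  qed
  then obtain t0 where t0: "1 \<le> t0"
    and "count_ge fst A t0 < diag_len k D t0 \<or> count_ge snd A t0 < diag_len k (reflect D) t0"
    by blast
  then consider "count_ge fst A t0 < diag_len k D t0"
    | "count_ge snd A t0 < diag_len k (reflect D) t0"
    by blast
  then show ?thesis
  proof cases
    case 1
    with antichain_diagram_step_right[OF A D _ t0] psub show ?thesis by blast
  next
    case 2
    have "reflect A \<in> antichains (grid b a) prod_le k"
      using antichains_reflect[OF A] by simp
    moreover have "antichain_diagram k (reflect A) \<subseteq> reflect D"
      using psub by (auto simp: antichain_diagram_reflect)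
    moreover have "count_ge fst (reflect A) t0 < diag_len k (reflect D) t0"
      using 2 by (simp add: count_ge_reflect)
    ultimately obtain A'' where
      "antichain_step (grid b a) prod_le k (reflect A) A''" "antichain_diagram k A'' \<subseteq> reflect D"
      using antichain_diagram_step_right[OF _ ferrers_durfee_reflect[OF D] _ t0] by blast
    then have "antichain_step (grid a b) prod_le k A (reflect A'')"
      "antichain_diagram k (reflect A'') \<subseteq> D"
      using antichain_step_reflect[of "grid b a" k "reflect A" A'']
        image_mono[of _ "reflect D" prod.swap]
      by (simp_all add: antichain_diagram_reflect)
    then show ?thesis by blast
  qed
qed

lemma antichain_diagram_climb:
  assumes D: "D \<in> ferrers_durfee k a b"
  shows "A \<in> antichains (grid a b) prod_le k \<Longrightarrow> antichain_diagram k A \<subseteq> D \<Longrightarrow>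
    \<exists>B \<in> antichains (grid a b) prod_le k.
      antichain_le (grid a b) prod_le k A B \<and> antichain_diagram k B = D"
proof (induction "card (D - antichain_diagram k A)" arbitrary: A rule: less_induct)
  case less
  note A = less.prems(1)
  show ?case
  proof (cases "antichain_diagram k A = D")
    case True
    with A show ?thesis by (auto simp: antichain_le_def)
  next
    case False
    with less.prems obtain A' where step: "antichain_step (grid a b) prod_le k A A'"
      and sub': "antichain_diagram k A' \<subseteq> D"
      using antichain_diagram_step[OF A D] by blast
    then have A': "A' \<in> antichains (grid a b) prod_le k" and "A \<noteq> A'"
      by (auto simp: antichain_step_def)
    have "antichain_diagram k A \<subseteq> antichain_diagram k A'"
      using step by (intro antichain_diagram_mono[of a b]) (simp add: antichain_le_def)
    moreover have "antichain_diagram k A \<noteq> antichain_diagram k A'"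
      using antichain_diagram_inj[OF A A'] \<open>A \<noteq> A'\<close> by blast
    ultimately have "card (D - antichain_diagram k A') < card (D - antichain_diagram k A)"
      using sub' ferrers_durfeeD(2)[OF D] finite_subset[OF _ finite_grid]
      by (intro psubset_card_mono) auto
    then obtain B where "B \<in> antichains (grid a b) prod_le k"
      "antichain_le (grid a b) prod_le k A' B" "antichain_diagram k B = D"
      using less.hyps[OF _ A' sub'] by blast
    with step show ?thesis
      unfolding antichain_le_def by (blast intro: converse_rtranclp_into_rtranclp)
  qed
qed

lemma antichain_diagram_image:
  assumes k: "k \<le> a" "k \<le> b"
  shows "antichain_diagram k ` antichains (grid a b) prod_le k = ferrers_durfee k a b"
proof
  show "antichain_diagram k ` antichains (grid a b) prod_le k \<subseteq> ferrers_durfee k a b"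
    using antichain_diagram_in_ferrers_durfee[OF _ k] by blast
next
  show "ferrers_durfee k a b \<subseteq> antichain_diagram k ` antichains (grid a b) prod_le k"
  proof
    fix D assume D: "D \<in> ferrers_durfee k a b"
    have "antichain_diagram k (antidiagonal k) \<subseteq> grid k k"
      using antichain_diagram_subset_grid[OF antidiagonal_in_antichains] by simp
    also have "\<dots> \<subseteq> D"
      using ferrers_durfeeD(3)[OF D] by (simp add: grid_def)
    finally show "D \<in> antichain_diagram k ` antichains (grid a b) prod_le k"
      using antichain_diagram_climb[OF D antidiagonal_in_antichains[OF k]] by blast
  qed
qed

lemma antichain_le_iff_antichain_diagram_subset:
  assumes A: "A \<in> antichains (grid a b) prod_le k" and B: "B \<in> antichains (grid a b) prod_le k"
    and k: "k \<le> a" "k \<le> b"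
  shows "antichain_le (grid a b) prod_le k A B \<longleftrightarrow> antichain_diagram k A \<subseteq> antichain_diagram k B"
proof
  assume "antichain_diagram k A \<subseteq> antichain_diagram k B"
  then obtain B' where "B' \<in> antichains (grid a b) prod_le k"
    "antichain_le (grid a b) prod_le k A B'"
    "antichain_diagram k B' = antichain_diagram k B"
    using antichain_diagram_climb[OF antichain_diagram_in_ferrers_durfee[OF B k] A] by blast
  with B show "antichain_le (grid a b) prod_le k A B"
    using antichain_diagram_inj by blast
qed (rule antichain_diagram_mono)

theorem corollary3p2:
  fixes a b k :: nat
  assumes "k \<le> min a b"
  shows "\<exists>f. bij_betw f (antichains (grid a b) prod_le k) (ferrers_durfee k a b) \<and>
    (\<forall>A\<in>antichains (grid a b) prod_le k. \<forall>B\<in>antichains (grid a b) prod_le k.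
        antichain_le (grid a b) prod_le k A B \<longleftrightarrow> f A \<subseteq> f B)"
proof (intro exI conjI)
  have k: "k \<le> a" "k \<le> b" using assms by simp_all
  show "bij_betw (antichain_diagram k) (antichains (grid a b) prod_le k) (ferrers_durfee k a b)"
    using antichain_diagram_inj antichain_diagram_image[OF k]
    by (auto simp: bij_betw_def inj_on_def)
  show "\<forall>A\<in>antichains (grid a b) prod_le k. \<forall>B\<in>antichains (grid a b) prod_le k.
      antichain_le (grid a b) prod_le k A B \<longleftrightarrow> antichain_diagram k A \<subseteq> antichain_diagram k B"
    using antichain_le_iff_antichain_diagram_subset[OF _ _ k] by blast
qed


end
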